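(* For every $u\in\Sigma^*$ and $v\in\Sigma^+$ there is a finite automaton $\mathcal{D}_{u\$v}$ over $\Sigma\cup\{\$\}$ (with $\$\notin\Sigma$) with $L(\mathcal{D}_{u\$v})=\{u'\$v'\mid u'\in\Sigma^*,\ v'\in\Sigma^+,\ u'v'^\omega=uv^\omega\}$ whose number of states is in $\mathcal{O}(|v|(|u|+|v|))$. *)

theory Defs
  imports Complex_Main
begin

record ('q, 'a) dfa =
  states :: "'q set"
  init   :: 'q
  delta  :: "'q \<Rightarrow> 'a \<Rightarrow> 'q"
  final  :: "'q set"

definition dfa_wf :: "'a set \<Rightarrow> ('q, 'a) dfa \<Rightarrow> bool" where
  "dfa_wf Alph A \<longleftrightarrow> finite (states A) \<and> init A \<in> states A \<and> final A \<subseteq> states A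
     \<and> (\<forall>q\<in>states A. \<forall>a\<in>Alph. delta A q a \<in> states A)"

definition dfa_run :: "('q, 'a) dfa \<Rightarrow> 'a list \<Rightarrow> 'q" where
  "dfa_run A w = foldl (delta A) (init A) w"

definition dfa_lang :: "'a set \<Rightarrow> ('q, 'a) dfa \<Rightarrow> 'a list set" where
  "dfa_lang Alph A = {w \<in> lists Alph. dfa_run A w \<in> final A}"

definition omega_word :: "'a list \<Rightarrow> 'a list \<Rightarrow> nat \<Rightarrow> 'a" where
  "omega_word u v i = (if i < length u then u ! i else v ! ((i - length u) mod length v))"

text \<open>The letter \$ is encoded as None, letters of Sigma as Some a.\<close>
definition dollar_word :: "'a list \<Rightarrow> 'a list \<Rightarrow> 'a option list" where
  "dollar_word u v = map Some u @ [None] @ map Some v"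

end

theory Submission
  imports Defs "HOL-Library.Countable" "HOL-Library.Omega_Words_Fun"
begin

text \<open>
  Let w = u v^\<omega> with n = |u| and p = |v|. Then u' v'^\<omega> = w holds iff u' is a prefix of w,
  v' is the factor of w that follows it, and the suffix of w after u' v' equals the suffix after u'.
  Since w has preperiod n and period p, its suffixes are represented by the positions below n + p,
  so a DFA can read u' $ v' while tracking its position in w, and at the $ remember only where
  v' starts. That start can be moved into the periodic part [n, n + p): a suffix of w with some
  period already occurs there. This leaves O(p (n + p)) states.
\<close>

definition dfa_rename :: "('q \<Rightarrow> 'r) \<Rightarrow> ('q, 'a) dfa \<Rightarrow> ('r, 'a) dfa" where
  "dfa_rename f A = \<lparr>states = f ` states A, init = f (init A),
     delta = (\<lambda>r a. f (delta A (inv f r) a)), final = f ` final A\<rparr>"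

lemma foldl_delta_dfa_rename:
  "inj f \<Longrightarrow> foldl (delta (dfa_rename f A)) (f q) x = f (foldl (delta A) q x)"
  by (induction x arbitrary: q) (simp_all add: dfa_rename_def)

lemma dfa_wf_rename: "inj f \<Longrightarrow> dfa_wf Alph A \<Longrightarrow> dfa_wf Alph (dfa_rename f A)"
  by (auto simp: dfa_wf_def dfa_rename_def)

lemma dfa_lang_rename: "inj f \<Longrightarrow> dfa_lang Alph (dfa_rename f A) = dfa_lang Alph A"
  using foldl_delta_dfa_rename[of f A "init A"]
  by (simp add: dfa_lang_def dfa_run_def inj_image_mem_iff) (simp add: dfa_rename_def inj_image_mem_iff)

lemma card_states_dfa_rename: "inj f \<Longrightarrow> card (states (dfa_rename f A)) = card (states A)"
  by (simp add: dfa_rename_def card_image inj_on_subset)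

lemma omega_word_conc_iter:
  assumes "v \<noteq> []"
  shows "omega_word u v = u \<frown> v\<^sup>\<omega>"
  using assms by (simp add: fun_eq_iff omega_word_def conc_def)

lemma iter_eq_iff_conc_fixpoint:
  assumes "v \<noteq> []"
  shows "v\<^sup>\<omega> = x \<longleftrightarrow> x = v \<frown> x"
proof
  assume "v\<^sup>\<omega> = x"
  then show "x = v \<frown> x" using assms iter_unroll by force
next
  assume fp: "x = v \<frown> x"
  have "x i = v ! (i mod length v)" for i
  proof (induction i rule: less_induct)
    case (less i)
    show ?case
    proof (cases "i < length v")
      case True
      then show ?thesis by (subst fp) simp
    next
      case False
      have "i - length v < i" using False assms by (cases v) auto
      have "x i = x (i - length v)" using False by (subst fp) simp
      also have "\<dots> = v ! (i mod length v)"
        using less[OF \<open>i - length v < i\<close>] False by (simp add: le_mod_geq)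
      finally show ?thesis .
    qed
  qed
  then show "v\<^sup>\<omega> = x" using assms by (simp add: fun_eq_iff)
qed

lemma conc_iter_eq_iff:
  assumes "v \<noteq> []"
  shows "u \<frown> v\<^sup>\<omega> = w \<longleftrightarrow>
    u = (w [0 \<rightarrow> length u]) \<and> v = (w [length u \<rightarrow> length u + length v]) \<and>
    suffix (length u + length v) w = suffix (length u) w"
proof -
  have "u \<frown> v\<^sup>\<omega> = w \<longleftrightarrow> u = prefix (length u) w \<and> v\<^sup>\<omega> = suffix (length u) w"
    by (metis concat_eq prefix_suffix subsequence_length diff_zero)
  also have "v\<^sup>\<omega> = suffix (length u) w \<longleftrightarrow>
      v = prefix (length v) (suffix (length u) w) \<and> suffix (length v) (suffix (length u) w) = suffix (length u) w"
    using assms by (metis iter_eq_iff_conc_fixpoint concat_eq prefix_suffix subsequence_length diff_zero)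
  finally show ?thesis by simp
qed

lemma lists_option_cases:
  "z \<in> lists (insert None (Some ` S)) \<Longrightarrow>
    (\<exists>x\<in>lists S. z = map Some x) \<or>
    (\<exists>x\<in>lists S. \<exists>z'\<in>lists (insert None (Some ` S)). z = map Some x @ None # z')"
proof (induction z)
  case (Cons a z)
  then show ?case
  proof (cases a)
    case None
    then show ?thesis using Cons.prems by force
  next
    case (Some b)
    then have "b \<in> S" "z \<in> lists (insert None (Some ` S))" using Cons.prems by auto
    then show ?thesis using Cons.IH Some
      by (metis Cons_in_lists_iff append_Cons list.simps(9))
  qed
qed auto

lemma suffix_add_cong: "suffix i w = suffix j w \<Longrightarrow> suffix (i + k) w = suffix (j + k) w"
  by (metis suffix_suffix)

lemma subsequence_cong_suffix:
  "suffix i w = suffix j w \<Longrightarrow> (w [i \<rightarrow> i + k]) = (w [j \<rightarrow> j + k])"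
  using subsequence_shift[of i w 0 k] subsequence_shift[of j w 0 k] by simp

lemma suffix_period_mult:
  assumes "suffix (i + q) w = suffix i w"
  shows "suffix (i + m * q) w = suffix i w"
proof (induction m)
  case (Suc m)
  have "suffix (i + Suc m * q) w = suffix q (suffix (i + m * q) w)"
    by (simp add: ac_simps)
  also have "\<dots> = suffix q (suffix i w)"
    by (simp only: Suc.IH)
  also have "\<dots> = suffix i w"
    using assms by (simp add: ac_simps)
  finally show ?case .
qed simp

lemma subsequence_Cons: "i < j \<Longrightarrow> (w [i \<rightarrow> j]) = w i # (w [Suc i \<rightarrow> j])"
  by (simp add: subsequence_def upt_conv_Cons del: upt_Suc)

text \<open>
  Track None j f: before the $, at position j of w. Track (Some s) j f: after the $, the
  v'-part started at position s and the automaton is now at j; f records that v' is nonempty.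
\<close>
datatype dollar_state = Sink | Track "nat option" nat bool

instance dollar_state :: countable
  by countable_datatype

locale ultimately_periodic_word =
  fixes w :: "'a word" and n p :: nat
  assumes period_pos: "0 < p"
    and suffix_period: "suffix (n + p) w = suffix n w"
begin

definition canon :: "nat \<Rightarrow> nat" where
  "canon i = (if i < n then i else n + (i - n) mod p)"

lemma canon_less: "canon i < n + p"
  using period_pos by (simp add: canon_def)

lemma canon_ge: "n \<le> i \<Longrightarrow> n \<le> canon i"
  by (simp add: canon_def)

lemma canon_add: "canon (canon i + k) = canon (i + k)"
  by (auto simp: canon_def mod_add_left_eq)

lemma suffix_canon: "suffix (canon i) w = suffix i w"
proof (cases "i < n")
  case False
  define r where "r = (i - n) mod p"
  have "suffix (n + r + p) w = suffix (n + r) w"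
    using suffix_add_cong[OF suffix_period, of r] by (simp add: ac_simps)
  then have "suffix (n + r + (i - n) div p * p) w = suffix (n + r) w"
    by (rule suffix_period_mult)
  moreover have "n + r + (i - n) div p * p = i"
    using False by (simp add: r_def)
  ultimately show ?thesis
    using False by (simp add: canon_def r_def)
qed (simp add: canon_def)

definition anchor :: "nat \<Rightarrow> nat" where
  "anchor i = canon (i + n * p)"

lemma le_add_mult_period: "n \<le> i + n * p"
proof -
  have "n * 1 \<le> n * p" using period_pos by (intro mult_le_mono2) simp
  then show ?thesis by linarith
qed

lemma anchor_bounds: "n \<le> anchor i" "anchor i < n + p"
  by (simp_all add: anchor_def canon_ge le_add_mult_period canon_less)

lemma canon_anchor: "canon (anchor i) = anchor i"
  using canon_add[of "i + n * p" 0] by (simp add: anchor_def)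

lemma anchor_canon: "anchor (canon i) = anchor i"
  by (simp add: anchor_def canon_add)

lemma suffix_anchor:
  assumes "0 < q" and "suffix (i + q) w = suffix i w"
  shows "suffix (anchor i) w = suffix i w"
proof -
  have "suffix (i + n * p + p) w = suffix (i + n * p) w"
    using suffix_add_cong[OF suffix_period, of "i + n * p - n"] le_add_mult_period[of i]
    by (simp add: ac_simps)
  then have "suffix (i + n * p) w = suffix (i + n * p + n * (q - 1) * p) w"
    by (rule suffix_period_mult[symmetric])
  also have "i + n * p + n * (q - 1) * p = i + (n * p) * q"
    using assms(1) by (cases q) (simp_all add: algebra_simps)
  also have "suffix (i + (n * p) * q) w = suffix i w"
    by (rule suffix_period_mult[OF assms(2)])
  finally have "suffix (i + n * p) w = suffix i w" .
  then show ?thesis by (simp add: anchor_def suffix_canon)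
qed

fun step :: "dollar_state \<Rightarrow> 'a option \<Rightarrow> dollar_state" where
  "step (Track s j f) (Some a) = (if a = w j then Track s (canon (j + 1)) True else Sink)"
| "step (Track None j f) None =
    (if suffix (anchor j) w = suffix j w then Track (Some (anchor j)) (anchor j) False else Sink)"
| "step _ _ = Sink"

definition dollar_dfa :: "(dollar_state, 'a option) dfa" where
  "dollar_dfa = \<lparr>
     states = insert Sink {Track s j f | s j f. s \<in> insert None (Some ` {n..<n + p}) \<and> j < n + p},
     init = Track None 0 False,
     delta = step,
     final = {Track (Some s) j True | s j. n \<le> s \<and> s < n + p \<and> j < n + p \<and> suffix j w = suffix s w}\<rparr>"

lemma init_dollar_dfa: "init dollar_dfa = Track None 0 False"
  and delta_dollar_dfa: "delta dollar_dfa = step"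
  by (simp_all add: dollar_dfa_def)

lemma states_dollar_dfa:
  "states dollar_dfa = insert Sink ((\<lambda>(s, j, f). Track s j f) `
     (insert None (Some ` {n..<n + p}) \<times> {..<n + p} \<times> UNIV))"
  by (auto simp: dollar_dfa_def image_iff Bex_def)

lemma dfa_run_dollar_dfa: "dfa_run dollar_dfa z = foldl step (Track None (canon 0) False) z"
  by (simp add: dfa_run_def init_dollar_dfa delta_dollar_dfa canon_def)

lemma Track_in_states_dollar_dfa:
  "Track s j f \<in> states dollar_dfa \<longleftrightarrow> s \<in> insert None (Some ` {n..<n + p}) \<and> j < n + p"
  by (simp add: dollar_dfa_def)

lemma foldl_step_Sink: "foldl step Sink x = Sink"
  by (induction x) auto

lemma foldl_step_Track:
  "foldl step (Track s (canon i) f) (map Some x) =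
    (if x = (w [i \<rightarrow> i + length x]) then Track s (canon (i + length x)) (f \<or> x \<noteq> []) else Sink)"
proof (induction x arbitrary: i f)
  case (Cons a x)
  have "step (Track s (canon i) f) (Some a) = (if a = w i then Track s (canon (i + 1)) True else Sink)"
    using canon_add[of i 1] fun_cong[OF suffix_canon[of i], of 0] by simp
  moreover have "a # x = (w [i \<rightarrow> i + length (a # x)]) \<longleftrightarrow> a = w i \<and> x = (w [i + 1 \<rightarrow> i + 1 + length x])"
    by (simp add: subsequence_Cons del: subseq_to_Suc)
  ultimately show ?case
    using Cons.IH[of "i + 1" True] by (simp add: foldl_step_Sink del: subseq_to_Suc)
qed simp

lemma dfa_run_dollar_word:
  "dfa_run dollar_dfa (dollar_word x y) =
    (if x = (w [0 \<rightarrow> length x]) \<and> suffix (anchor (length x)) w = suffix (length x) w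
        \<and> y = (w [anchor (length x) \<rightarrow> anchor (length x) + length y])
     then Track (Some (anchor (length x))) (canon (anchor (length x) + length y)) (y \<noteq> [])
     else Sink)"
  using foldl_step_Track[of None 0 False x]
      foldl_step_Track[of "Some (anchor (length x))" "anchor (length x)" False y]
  by (simp add: dfa_run_dollar_dfa dollar_word_def anchor_canon suffix_canon canon_anchor
      foldl_step_Sink)

lemma final_dollar_dfa_iff:
  "Track (Some (anchor i)) (canon j) f \<in> final dollar_dfa \<longleftrightarrow> f \<and> suffix j w = suffix (anchor i) w"
  using anchor_bounds[of i] canon_less[of j] by (auto simp: dollar_dfa_def suffix_canon)

lemma dfa_run_dollar_word_final_iff:
  "dfa_run dollar_dfa (dollar_word x y) \<in> final dollar_dfa \<longleftrightarrow> y \<noteq> [] \<and> omega_word x y = w"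
proof -
  let ?a = "anchor (length x)"
  have match: "(w [?a \<rightarrow> ?a + length y]) = (w [length x \<rightarrow> length x + length y])"
    if "suffix ?a w = suffix (length x) w"
    using subsequence_cong_suffix[OF that] .
  have period: "suffix (?a + length y) w = suffix ?a w \<longleftrightarrow>
                 suffix (length x + length y) w = suffix (length x) w"
    if "suffix ?a w = suffix (length x) w"
    using suffix_add_cong[OF that, of "length y"] that by simp
  show ?thesis
  proof
    assume acc: "dfa_run dollar_dfa (dollar_word x y) \<in> final dollar_dfa"
    moreover have "Sink \<notin> final dollar_dfa" by (simp add: dollar_dfa_def)
    ultimately have run: "x = (w [0 \<rightarrow> length x]) \<and> suffix ?a w = suffix (length x) w
        \<and> y = (w [?a \<rightarrow> ?a + length y])"
      by (auto simp: dfa_run_dollar_word split: if_splits)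
    with acc have "y \<noteq> [] \<and> suffix (?a + length y) w = suffix ?a w"
      by (simp add: dfa_run_dollar_word final_dollar_dfa_iff)
    with run show "y \<noteq> [] \<and> omega_word x y = w"
      using match period by (simp add: omega_word_conc_iter conc_iter_eq_iff)
  next
    assume "y \<noteq> [] \<and> omega_word x y = w"
    then have "y \<noteq> []" and "x \<frown> y\<^sup>\<omega> = w"
      by (auto simp: omega_word_conc_iter)
    then have "x = (w [0 \<rightarrow> length x])" "y = (w [length x \<rightarrow> length x + length y])"
      and "suffix (length x + length y) w = suffix (length x) w"
      by (simp_all add: conc_iter_eq_iff)
    moreover from this have "suffix ?a w = suffix (length x) w"
      using \<open>y \<noteq> []\<close> by (intro suffix_anchor[of "length y"]) simp_all
    ultimately show "dfa_run dollar_dfa (dollar_word x y) \<in> final dollar_dfa"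
      using match period \<open>y \<noteq> []\<close> by (simp add: dfa_run_dollar_word final_dollar_dfa_iff)
  qed
qed

lemma dfa_wf_dollar_dfa: "dfa_wf Alph dollar_dfa"
proof -
  have "finite (states dollar_dfa)"
    by (simp add: states_dollar_dfa)
  moreover have "delta dollar_dfa q a \<in> states dollar_dfa" if "q \<in> states dollar_dfa" for q a
    using that unfolding delta_dollar_dfa by (cases "(q, a)" rule: step.cases)
      (auto simp: Track_in_states_dollar_dfa canon_less anchor_bounds, simp_all add: dollar_dfa_def)
  moreover have "init dollar_dfa \<in> states dollar_dfa"
    using period_pos by (simp add: init_dollar_dfa Track_in_states_dollar_dfa)
  moreover have "final dollar_dfa \<subseteq> states dollar_dfa"
  proof
    fix q assume "q \<in> final dollar_dfa"
    then obtain s j where "q = Track (Some s) j True" "n \<le> s" "s < n + p" "j < n + p"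
      by (auto simp: dollar_dfa_def)
    then show "q \<in> states dollar_dfa" by (simp add: Track_in_states_dollar_dfa)
  qed
  ultimately show ?thesis by (simp add: dfa_wf_def)
qed

lemma card_states_dollar_dfa: "card (states dollar_dfa) \<le> 2 * (p + 1) * (n + p) + 1"
proof -
  let ?T = "insert None (Some ` {n..<n + p}) \<times> {..<n + p} \<times> (UNIV :: bool set)"
  have "card (states dollar_dfa) \<le> card ((\<lambda>(s, j, f). Track s j f) ` ?T) + 1"
    by (simp add: states_dollar_dfa card_insert_if)
  also have "\<dots> \<le> card ?T + 1"
    using card_image_le[of ?T] by simp
  also have "card ?T = (p + 1) * (n + p) * 2"
    by (simp add: card_cartesian_product card_image)
  finally show ?thesis by simp
qed

lemma dfa_lang_dollar_dfa:
  "dfa_lang (insert None (Some ` S)) dollar_dfa =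
     {dollar_word x y | x y. x \<in> lists S \<and> y \<in> lists S \<and> y \<noteq> [] \<and> omega_word x y = w}"
    (is "?L = ?R")
proof
  show "?R \<subseteq> ?L"
  proof
    fix z assume "z \<in> ?R"
    then obtain x y where z: "z = dollar_word x y" "x \<in> lists S" "y \<in> lists S"
      and "y \<noteq> []" "omega_word x y = w"
      by blast
    then have "dfa_run dollar_dfa z \<in> final dollar_dfa"
      by (simp add: dfa_run_dollar_word_final_iff)
    moreover have "z \<in> lists (insert None (Some ` S))"
      using z by (auto simp: dollar_word_def)
    ultimately show "z \<in> ?L" by (simp add: dfa_lang_def)
  qed
next
  have no_dollar: "dfa_run dollar_dfa (map Some x) \<notin> final dollar_dfa" for x
    using foldl_step_Track[of None 0 False x]
    by (simp add: dfa_run_dollar_dfa) (simp add: dollar_dfa_def)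
  have two_dollars: "dfa_run dollar_dfa (dollar_word x y @ None # z) = Sink" for x y z
    using dfa_run_dollar_word[of x y] by (simp add: dfa_run_dollar_dfa foldl_step_Sink)
  have "Sink \<notin> final dollar_dfa" by (simp add: dollar_dfa_def)
  show "?L \<subseteq> ?R"
  proof
    fix z assume "z \<in> ?L"
    then have z: "z \<in> lists (insert None (Some ` S))" and acc: "dfa_run dollar_dfa z \<in> final dollar_dfa"
      by (simp_all add: dfa_lang_def)
    from lists_option_cases[OF z] consider x where "z = map Some x"
      | x z' where "z = map Some x @ None # z'" "x \<in> lists S" "z' \<in> lists (insert None (Some ` S))"
      by blast
    then show "z \<in> ?R"
    proof cases
      case 1
      then show ?thesis using acc no_dollar by simp
    next
      case (2 x z')
      from lists_option_cases[OF 2(3)] consider y where "z' = map Some y" "y \<in> lists S"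
        | y z'' where "z' = map Some y @ None # z''"
        by blast
      then show ?thesis
      proof cases
        case 1
        then have z_eq: "z = dollar_word x y" using 2 by (simp add: dollar_word_def)
        with acc have "y \<noteq> [] \<and> omega_word x y = w"
          by (simp add: dfa_run_dollar_word_final_iff)
        then show ?thesis using z_eq 1 2 by blast
      next
        case (2 y z'')
        then have "z = dollar_word x y @ None # z''" using \<open>z = map Some x @ None # z'\<close>
          by (simp add: dollar_word_def)
        then show ?thesis using acc two_dollars \<open>Sink \<notin> final dollar_dfa\<close> by simp
      qed
    qed
  qed
qed

end

lemma suffix_period_omega_word:
  assumes "v \<noteq> []"
  shows "suffix (length u + length v) (omega_word u v) = suffix (length u) (omega_word u v)"
  using conc_iter_eq_iff[OF assms, of u "u \<frown> v\<^sup>\<omega>"] assms by (simp add: omega_word_conc_iter)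

lemma quadratic_state_bound:
  assumes "0 < (p :: nat)"
  shows "2 * (p + 1) * (n + p) + 1 \<le> 5 * p * (n + p)"
proof -
  have "1 \<le> p * (n + p)" and "n + p \<le> p * (n + p)"
    using assms by (simp_all add: Suc_le_eq)
  then show ?thesis by (simp add: algebra_simps)
qed

theorem proposition3:
  fixes \<Sigma> :: "'a set"
  assumes "finite \<Sigma>"
  shows "\<exists>C::real. \<forall>u v. u \<in> lists \<Sigma> \<longrightarrow> v \<in> lists \<Sigma> \<longrightarrow> v \<noteq> [] \<longrightarrow>
     (\<exists>A :: (nat, 'a option) dfa.
        dfa_wf (insert None (Some ` \<Sigma>)) A \<and>
        dfa_lang (insert None (Some ` \<Sigma>)) A =
          {dollar_word u' v' | u' v'. u' \<in> lists \<Sigma> \<and> v' \<in> lists \<Sigma> \<and> v' \<noteq> [] \<and>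
                                    omega_word u' v' = omega_word u v} \<and>
        real (card (states A)) \<le> C * real (length v) * real (length u + length v))"
  \<comment> \<open>The construction needs no finiteness of the alphabet.\<close>
proof (intro exI[of _ 5] allI impI)
  fix u v :: "'a list"
  assume "u \<in> lists \<Sigma>" "v \<in> lists \<Sigma>" "v \<noteq> []"
  then interpret ultimately_periodic_word "omega_word u v" "length u" "length v"
    using suffix_period_omega_word[of v u] by unfold_locales simp_all
  let ?A = "dfa_rename to_nat dollar_dfa"
  have "card (states ?A) \<le> 5 * length v * (length u + length v)"
    using order_trans[OF card_states_dollar_dfa quadratic_state_bound[OF period_pos]]
    by (simp only: card_states_dfa_rename[OF inj_to_nat])
  then have "real (card (states ?A)) \<le> 5 * real (length v) * real (length u + length v)"
    using of_nat_mono[where 'a = real] by fastforce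
  then show "\<exists>A :: (nat, 'a option) dfa.
        dfa_wf (insert None (Some ` \<Sigma>)) A \<and>
        dfa_lang (insert None (Some ` \<Sigma>)) A =
          {dollar_word u' v' | u' v'. u' \<in> lists \<Sigma> \<and> v' \<in> lists \<Sigma> \<and> v' \<noteq> [] \<and>
                                    omega_word u' v' = omega_word u v} \<and>
        real (card (states A)) \<le> 5 * real (length v) * real (length u + length v)"
    using dfa_wf_rename[OF inj_to_nat dfa_wf_dollar_dfa] dfa_lang_rename[OF inj_to_nat]
      dfa_lang_dollar_dfa
    by blast
qed

end
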